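(* Let $m\ge 3$, $n=2m$, $\tau(v)=n+1-v$ for $v\in[n]$, and let $G$ be a graph on $[n]$ such that every $3$-set $S\subseteq[n]$ satisfies $|E(G[S])|+|E(G[\tau(S)])|\ge 2$. Define the graph $W$ on $[m]$ by: $\{i,j\}$ is an edge of $W$ iff there is exactly one edge of $G$ with one endpoint in $\{i,\tau(i)\}$ and the other in $\{j,\tau(j)\}$. If $i,j,k\in[m]$ are distinct with $j,k\in N_W(i)$, then there are at least $3$ edges of $G$ with one endpoint in $\{j,\tau(j)\}$ and the other in $\{k,\tau(k)\}$. In particular $W$ is triangle-free.
   Context: $G[A]$ is the induced subgraph on $A$; $N_W(i)$ is the set of neighbours of $i$ in $W$. *)

theory Defs
  imports Main
begin

definition simple_graph_on :: "nat set \<Rightarrow> nat set set \<Rightarrow> bool" where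
  "simple_graph_on V E \<longleftrightarrow> (\<forall>e\<in>E. e \<subseteq> V \<and> card e = 2)"

definition induced_edges :: "nat set set \<Rightarrow> nat set \<Rightarrow> nat" where
  "induced_edges E S = card {e\<in>E. e \<subseteq> S}"

definition cross_edges :: "nat set set \<Rightarrow> nat set \<Rightarrow> nat set \<Rightarrow> nat" where
  "cross_edges E A B = card {e\<in>E. \<exists>a\<in>A. \<exists>b\<in>B. e = {a, b}}"

definition tau :: "nat \<Rightarrow> nat \<Rightarrow> nat" where
  "tau n v = n + 1 - v"

definition W_adj :: "nat \<Rightarrow> nat set set \<Rightarrow> nat \<Rightarrow> nat \<Rightarrow> bool" where
  "W_adj m E i j \<longleftrightarrow> i \<in> {1..m} \<and> j \<in> {1..m} \<and> i \<noteq> j \<and>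
     cross_edges E {i, tau (2*m) i} {j, tau (2*m) j} = 1"

end

theory Submission
  imports Defs
begin

text \<open>Apply the
  hypothesis to the four 3-sets \<open>{i, j', k'}\<close> with \<open>j' \<in> {j, \<tau> j}\<close>, \<open>k' \<in> {k, \<tau> k}\<close>: together
  with their \<open>\<tau>\<close>-images they see every potential edge between the three pairs. Split the
  edges between two pairs by parity (\<open>{x, y}, {\<tau> x, \<tau> y}\<close> versus \<open>{x, \<tau> y}, {\<tau> x, y}\<close>). The
  3-set whose parities miss both edges at \<open>i\<close> forces two edges of one parity between the
  \<open>j\<close>- and \<open>k\<close>-pairs, and a 3-set missing one of them forces an edge of the other parity.
  Hence at least three edges join \<open>{j, \<tau> j}\<close> to \<open>{k, \<tau> k}\<close>, so \<open>j\<close> and \<open>k\<close> are not adjacent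
  in \<open>W\<close>.\<close>

definition edge_ind :: "nat set set \<Rightarrow> nat \<Rightarrow> nat \<Rightarrow> nat" where
  "edge_ind G u v = of_bool ({u, v} \<in> G)"

lemma card_filter_eq_sum_of_bool:
  "finite X \<Longrightarrow> card {x\<in>X. P x} = (\<Sum>x\<in>X. of_bool (P x))"
  by (simp add: sum.If_cases Int_def conj_commute)

lemma cross_edges_two_pairs:
  assumes "distinct [a1, a2, b1, b2]"
  shows "cross_edges G {a1, a2} {b1, b2} =
           edge_ind G a1 b1 + edge_ind G a1 b2 + edge_ind G a2 b1 + edge_ind G a2 b2"
proof -
  have "{e\<in>G. \<exists>a\<in>{a1, a2}. \<exists>b\<in>{b1, b2}. e = {a, b}} =
        {e\<in>{{a1, b1}, {a1, b2}, {a2, b1}, {a2, b2}}. e \<in> G}"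
    by auto
  moreover have "card {e\<in>{{a1, b1}, {a1, b2}, {a2, b1}, {a2, b2}}. e \<in> G} =
        edge_ind G a1 b1 + edge_ind G a1 b2 + edge_ind G a2 b1 + edge_ind G a2 b2"
    using assms by (subst card_filter_eq_sum_of_bool) (auto simp: edge_ind_def doubleton_eq_iff)
  ultimately show ?thesis
    unfolding cross_edges_def by simp
qed

lemma induced_edges_three:
  assumes "distinct [x, y, z]" and "\<forall>e\<in>G. card e = 2"
  shows "induced_edges G {x, y, z} = edge_ind G x y + edge_ind G x z + edge_ind G y z"
proof -
  have "{e\<in>G. e \<subseteq> {x, y, z}} = {e\<in>{{x, y}, {x, z}, {y, z}}. e \<in> G}"
  proof (intro set_eqI iffI)
    fix e assume "e \<in> {e\<in>G. e \<subseteq> {x, y, z}}"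
    then have e: "e \<in> G" "e \<subseteq> {x, y, z}" by auto
    then obtain a b where ab: "e = {a, b}" "a \<noteq> b"
      using assms(2) by (meson card_2_iff)
    have "a \<in> {x, y, z}" "b \<in> {x, y, z}"
      using e(2) ab(1) by auto
    with ab have "e = {x, y} \<or> e = {x, z} \<or> e = {y, z}"
      by (auto simp: insert_commute)
    with e(1) show "e \<in> {e\<in>{{x, y}, {x, z}, {y, z}}. e \<in> G}" by blast
  qed auto
  moreover have "card {e\<in>{{x, y}, {x, z}, {y, z}}. e \<in> G} =
      edge_ind G x y + edge_ind G x z + edge_ind G y z"
    using assms(1) by (subst card_filter_eq_sum_of_bool) (auto simp: edge_ind_def doubleton_eq_iff)
  ultimately show ?thesis
    unfolding induced_edges_def by simp
qed

lemma tau_tau: "v \<in> {1..n} \<Longrightarrow> tau n (tau n v) = v"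
  by (auto simp: tau_def)

lemma inj_on_tau: "inj_on (tau n) {1..n}"
  by (metis inj_on_inverseI tau_tau)

lemma tau_lower_half: "v \<in> {1..m} \<Longrightarrow> tau (2 * m) v \<in> {m+1..2 * m}"
  by (auto simp: tau_def)

lemma symmetric_triangle_bound:
  assumes G: "simple_graph_on {1..n} G"
    and hyp: "\<forall>S. S \<subseteq> {1..n} \<and> card S = 3 \<longrightarrow>
           induced_edges G S + induced_edges G (tau n ` S) \<ge> 2"
    and xyz: "distinct [x, y, z]" "x \<in> {1..n}" "y \<in> {1..n}" "z \<in> {1..n}"
  shows "edge_ind G x y + edge_ind G x z + edge_ind G y z
         + edge_ind G (tau n x) (tau n y) + edge_ind G (tau n x) (tau n z)
         + edge_ind G (tau n y) (tau n z) \<ge> 2"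
proof -
  have card2: "\<forall>e\<in>G. card e = 2"
    using G unfolding simple_graph_on_def by blast
  have "distinct [tau n x, tau n y, tau n z]"
    using xyz inj_on_tau[of n] by (auto dest: inj_onD)
  moreover have "induced_edges G {x, y, z} + induced_edges G (tau n ` {x, y, z}) \<ge> 2"
    using hyp[rule_format, of "{x, y, z}"] xyz by (simp add: insert_subset)
  ultimately show ?thesis
    using induced_edges_three[OF xyz(1) card2] induced_edges_three[OF _ card2] by simp
qed

text \<open>\<open>a\<^sub>p, b\<^sub>p, c\<^sub>p\<close> are the numbers of edges of parity \<open>p\<close> between the
  pairs of \<open>i, j\<close>, of \<open>i, k\<close> and of \<open>j, k\<close>; the four inequalities come from the four 3-sets.\<close>

lemma parity_counting:
  fixes a0 a1 b0 b1 c0 c1 :: nat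
  assumes "a0 + a1 = 1" "b0 + b1 = 1"
    and "a0 + b0 + c0 \<ge> 2" "a0 + b1 + c1 \<ge> 2" "a1 + b0 + c1 \<ge> 2" "a1 + b1 + c0 \<ge> 2"
  shows "c0 + c1 \<ge> 3"
proof -
  have "a0 = 0 \<or> a0 = 1" "b0 = 0 \<or> b0 = 1"
    using assms(1,2) by linarith+
  then show ?thesis
    using assms by (elim disjE) linarith+
qed

lemma W_common_neighbours_cross_edges:
  assumes n: "n = 2 * m"
    and G: "simple_graph_on {1..n} G"
    and hyp: "\<forall>S. S \<subseteq> {1..n} \<and> card S = 3 \<longrightarrow>
           induced_edges G S + induced_edges G (tau n ` S) \<ge> 2"
    and ij: "W_adj m G i j" and ik: "W_adj m G i k" and "j \<noteq> k"
  shows "cross_edges G {j, tau n j} {k, tau n k} \<ge> 3"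
proof -
  let ?t = "tau n" and ?e = "edge_ind G"
  have lower: "i \<in> {1..m}" "j \<in> {1..m}" "k \<in> {1..m}" "i \<noteq> j" "i \<noteq> k"
    using ij ik unfolding W_adj_def by auto
  then have upper: "?t i \<in> {m+1..n}" "?t j \<in> {m+1..n}" "?t k \<in> {m+1..n}"
    using n tau_lower_half by auto
  have inj: "?t i \<noteq> ?t j" "?t i \<noteq> ?t k" "?t j \<noteq> ?t k"
    using lower \<open>j \<noteq> k\<close> n by (auto simp: tau_def)
  have six: "distinct [i, j, k, ?t i, ?t j, ?t k]"
    using lower upper inj \<open>j \<noteq> k\<close> by auto
  have range: "i \<in> {1..n}" "j \<in> {1..n}" "k \<in> {1..n}"
    "?t i \<in> {1..n}" "?t j \<in> {1..n}" "?t k \<in> {1..n}"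
    using lower upper n by auto
  have tt: "?t (?t j) = j" "?t (?t k) = k"
    using range tau_tau by auto
  have pairs: "distinct [i, ?t i, j, ?t j]" "distinct [i, ?t i, k, ?t k]" "distinct [j, ?t j, k, ?t k]"
    and triples: "distinct [i, j, k]" "distinct [i, j, ?t k]"
      "distinct [i, ?t j, k]" "distinct [i, ?t j, ?t k]"
    using six by auto
  note triangle = symmetric_triangle_bound[OF G hyp]
  have "cross_edges G {i, ?t i} {j, ?t j} = 1" "cross_edges G {i, ?t i} {k, ?t k} = 1"
    using ij ik n unfolding W_adj_def by simp_all
  then have "?e i j + ?e i (?t j) + ?e (?t i) j + ?e (?t i) (?t j) = 1"
    and "?e i k + ?e i (?t k) + ?e (?t i) k + ?e (?t i) (?t k) = 1"
    using pairs(1,2)[THEN cross_edges_two_pairs] by simp_all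
  moreover have "cross_edges G {j, ?t j} {k, ?t k} =
                 ?e j k + ?e (?t j) (?t k) + (?e j (?t k) + ?e (?t j) k)"
    using pairs(3)[THEN cross_edges_two_pairs] by simp
  moreover have "?e i j + ?e i k + ?e j k + ?e (?t i) (?t j) + ?e (?t i) (?t k) + ?e (?t j) (?t k) \<ge> 2"
    using triangle[OF triples(1) range(1-3)] .
  moreover have "?e i j + ?e i (?t k) + ?e j (?t k) + ?e (?t i) (?t j) + ?e (?t i) k + ?e (?t j) k \<ge> 2"
    using triangle[OF triples(2) range(1,2,6)] unfolding tt .
  moreover have "?e i (?t j) + ?e i k + ?e (?t j) k + ?e (?t i) j + ?e (?t i) (?t k) + ?e j (?t k) \<ge> 2"
    using triangle[OF triples(3) range(1,5,3)] unfolding tt .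
  moreover have "?e i (?t j) + ?e i (?t k) + ?e (?t j) (?t k) + ?e (?t i) j + ?e (?t i) k + ?e j k \<ge> 2"
    using triangle[OF triples(4) range(1,5,6)] unfolding tt .
  ultimately show ?thesis
    using parity_counting[of "?e i j + ?e (?t i) (?t j)" "?e i (?t j) + ?e (?t i) j"
        "?e i k + ?e (?t i) (?t k)" "?e i (?t k) + ?e (?t i) k"
        "?e j k + ?e (?t j) (?t k)" "?e j (?t k) + ?e (?t j) k"]
    by linarith
qed

theorem mainTheorem7:
  fixes m n :: nat and G :: "nat set set"
  assumes "m \<ge> 3" and "n = 2 * m"
    and "simple_graph_on {1..n} G"
    and "\<forall>S. S \<subseteq> {1..n} \<and> card S = 3 \<longrightarrow>
           induced_edges G S + induced_edges G (tau n ` S) \<ge> 2"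
  shows "(\<forall>i j k. i \<in> {1..m} \<and> j \<in> {1..m} \<and> k \<in> {1..m} \<and>
            i \<noteq> j \<and> i \<noteq> k \<and> j \<noteq> k \<and> W_adj m G i j \<and> W_adj m G i k \<longrightarrow>
            cross_edges G {j, tau n j} {k, tau n k} \<ge> 3)
       \<and> (\<nexists>i j k. W_adj m G i j \<and> W_adj m G j k \<and> W_adj m G i k)"
proof
  note common = W_common_neighbours_cross_edges[OF assms(2-4)]
  show "\<forall>i j k. i \<in> {1..m} \<and> j \<in> {1..m} \<and> k \<in> {1..m} \<and>
          i \<noteq> j \<and> i \<noteq> k \<and> j \<noteq> k \<and> W_adj m G i j \<and> W_adj m G i k \<longrightarrow>
          cross_edges G {j, tau n j} {k, tau n k} \<ge> 3"
    using common by blast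
  show "\<nexists>i j k. W_adj m G i j \<and> W_adj m G j k \<and> W_adj m G i k"
  proof
    assume "\<exists>i j k. W_adj m G i j \<and> W_adj m G j k \<and> W_adj m G i k"
    then obtain i j k where "W_adj m G i j" "W_adj m G j k" "W_adj m G i k" by blast
    with common[of i j k] assms(2) show False
      unfolding W_adj_def by auto
  qed
qed

end
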